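(* In the nonparametric MAR regression model described in the context, let $h\in L_2(F)$ and consider the linear functional $E[h(\varepsilon)]$. Its canonical gradient is $$g^*(X,\delta Y,\delta)=\delta\big\{s^*(\varepsilon)+\ell(\varepsilon)t^*(X)\big\},$$ i.e. it is characterized by the direction $(u^*,s^*,t^*,w^* )=(0,s^*,t^*,0)$ in the tangent set, where $$s^*(z)=\frac1{E\delta}\Big\{h_0(z)+\sigma^2E[h_0(\varepsilon)\ell_0(\varepsilon)]\,\ell_0(z)\Big\},\quad z\in\mathbb R,\qquad t^*(x)=-\frac{\sigma^2}{E\delta}E[h_0(\varepsilon)\ell_0(\varepsilon)],\quad x\in[0,1]^m,$$ with $\sigma^2=E[\varepsilon^2]$, $h_0(z)=h(z)-E[h(\varepsilon)]-\frac{z}{\sigma^2}E[\varepsilon h(\varepsilon)]$, and $\ell_0(z)=\ell(z)-z/\sigma^2$.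
   Context: Model: $Y=r(X)+\varepsilon$ with $X\in[0,1]^m$ having distribution $G$, $\varepsilon$ independent of $X$ with mean zero, variance $\sigma^2$, distribution function $F$ and density $f$; $f$ is absolutely continuous with a.e. derivative $f'$, score $\ell=-f'/f$ and finite Fisher information $J=\int\ell^2 f<\infty$. The response indicator $\delta$ satisfies MAR: $P(\delta=1\mid X,Y)=\pi(X)$, $\pi:[0,1]^m\to(0,1]$. Observations are i.i.d. copies of $(X,\delta Y,\delta)$. No parametric model is imposed on $G$, $\pi$, $r$ (beyond smoothness) or $f$ (beyond mean zero and finite Fisher information). $G_1$ denotes the conditional distribution of $X$ given $\delta=1$ and $E_1$ expectation under $G_1$. Tangent structure: perturbations are indexed by $\gamma=(u,s,t,w)$ with $u\in L_{2,0}(G)$ (square integrable, mean zero under $G$), $s\in\mathcal S=\{s\in L_2(F):\int s f=0,\ \int z s(z)f(z)dz=0\}$, $t\in L_2(G_1)$, $w\in L_2(G_\pi)$ where $G_\pi(dx)=\pi(x)(1-\pi(x))G(dx)$; the corresponding score is $$d_\gamma(X,\delta Y,\delta)=u(X)+\delta\{s(\varepsilon)+\ell(\varepsilon)t(X)\}+\{\delta-\pi(X)\}w(X),$$ and the tangent space is the closure of $\{d_\gamma\}$. The functional $E[h(\varepsilon)]$ has gradient $h_0(\varepsilon)$ in the sense that perturbing $f$ to $f_{ns}=f(1+n^{-1/2}s)$ changes it at rate $n^{-1/2}E[h_0(\varepsilon)s(\varepsilon)]$. The canonical gradient is the element $g^*$ of the tangent space with $E[h_0(\varepsilon)s(\varepsilon)]=E[g^*d_\gamma]$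 for all $\gamma$. *)

theory Defs
  imports "HOL-Probability.Probability"
begin

definition L2 :: "'a measure \<Rightarrow> ('a \<Rightarrow> real) \<Rightarrow> bool" where
  "L2 M g \<longleftrightarrow> g \<in> borel_measurable M \<and> integrable M (\<lambda>x. (g x)^2)"

definition unit_cube :: "(real^'m) set" where
  "unit_cube = {x. \<forall>i. 0 \<le> x$i \<and> x$i \<le> 1}"

definition err_dist :: "(real \<Rightarrow> real) \<Rightarrow> real measure" where
  "err_dist f = density lborel (\<lambda>z. ennreal (f z))"

text \<open>Score of the error density: l = - f' / f (0 where f = 0).\<close>
definition score :: "(real \<Rightarrow> real) \<Rightarrow> (real \<Rightarrow> real) \<Rightarrow> real \<Rightarrow> real" where
  "score f f' z = - f' z / f z"

text \<open>Joint law of (X, delta, epsilon): X ~ G, P(delta=1|X)=pi(X), epsilon ~ F independent of (X,delta).\<close>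
definition joint_law :: "(real^'m) measure \<Rightarrow> (real^'m \<Rightarrow> real) \<Rightarrow> (real \<Rightarrow> real)
    \<Rightarrow> ((real^'m) \<times> bool \<times> real) measure" where
  "joint_law G \<pi> f = density (G \<Otimes>\<^sub>M (count_space UNIV \<Otimes>\<^sub>M lborel))
      (\<lambda>(x, d, z). ennreal ((if d then \<pi> x else 1 - \<pi> x) * f z))"

text \<open>E delta = int pi dG.\<close>
definition resp_prob :: "(real^'m) measure \<Rightarrow> (real^'m \<Rightarrow> real) \<Rightarrow> real" where
  "resp_prob G \<pi> = (\<integral>x. \<pi> x \<partial>G)"

text \<open>G_1: conditional distribution of X given delta = 1.\<close>
definition G1 :: "(real^'m) measure \<Rightarrow> (real^'m \<Rightarrow> real) \<Rightarrow> (real^'m) measure" where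
  "G1 G \<pi> = density G (\<lambda>x. ennreal (\<pi> x / resp_prob G \<pi>))"

definition Gpi :: "(real^'m) measure \<Rightarrow> (real^'m \<Rightarrow> real) \<Rightarrow> (real^'m) measure" where
  "Gpi G \<pi> = density G (\<lambda>x. ennreal (\<pi> x * (1 - \<pi> x)))"

definition S_set :: "(real \<Rightarrow> real) \<Rightarrow> (real \<Rightarrow> real) set" where
  "S_set f = {s. L2 (err_dist f) s \<and> (\<integral>z. s z \<partial>err_dist f) = 0
                 \<and> (\<integral>z. z * s z \<partial>err_dist f) = 0}"

definition tangent_index :: "(real^'m) measure \<Rightarrow> (real^'m \<Rightarrow> real) \<Rightarrow> (real \<Rightarrow> real)
    \<Rightarrow> ((real^'m \<Rightarrow> real) \<times> (real \<Rightarrow> real) \<times> (real^'m \<Rightarrow> real) \<times> (real^'m \<Rightarrow> real)) set" where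
  "tangent_index G \<pi> f = {(u, s, t, w). L2 G u \<and> (\<integral>x. u x \<partial>G) = 0 \<and> s \<in> S_set f
      \<and> L2 (G1 G \<pi>) t \<and> L2 (Gpi G \<pi>) w}"

text \<open>Score d_gamma(X, delta Y, delta) written as a function of (X, delta, epsilon).\<close>
definition d_score :: "(real \<Rightarrow> real) \<Rightarrow> (real^'m \<Rightarrow> real)
    \<Rightarrow> ((real^'m \<Rightarrow> real) \<times> (real \<Rightarrow> real) \<times> (real^'m \<Rightarrow> real) \<times> (real^'m \<Rightarrow> real))
    \<Rightarrow> (real^'m) \<times> bool \<times> real \<Rightarrow> real" where
  "d_score l \<pi> \<gamma> = (case \<gamma> of (u, s, t, w) \<Rightarrow>
     (\<lambda>(x, d, z). u x + (if d then s z + l z * t x else 0)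
                  + ((if d then 1 else 0) - \<pi> x) * w x))"

definition is_canonical_gradient :: "(real^'m) measure \<Rightarrow> (real^'m \<Rightarrow> real) \<Rightarrow> (real \<Rightarrow> real)
    \<Rightarrow> (real \<Rightarrow> real) \<Rightarrow> (real \<Rightarrow> real) \<Rightarrow> ((real^'m) \<times> bool \<times> real \<Rightarrow> real) \<Rightarrow> bool" where
  "is_canonical_gradient G \<pi> f l h0 g \<longleftrightarrow>
     L2 (joint_law G \<pi> f) g
   \<and> (\<forall>e>0. \<exists>\<gamma>\<in>tangent_index G \<pi> f. L2 (joint_law G \<pi> f) (d_score l \<pi> \<gamma>) \<and>
          (\<integral>\<omega>. (g \<omega> - d_score l \<pi> \<gamma> \<omega>)^2 \<partial>joint_law G \<pi> f) < e)
   \<and> (\<forall>\<gamma>\<in>tangent_index G \<pi> f.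
          (\<integral>\<omega>. h0 (snd (snd \<omega>)) * fst (snd \<gamma>) (snd (snd \<omega>)) \<partial>joint_law G \<pi> f)
        = (\<integral>\<omega>. g \<omega> * d_score l \<pi> \<gamma> \<omega> \<partial>joint_law G \<pi> f))"

definition err_var :: "(real \<Rightarrow> real) \<Rightarrow> real" where
  "err_var f = (\<integral>z. z^2 \<partial>err_dist f)"

definition h0_of :: "(real \<Rightarrow> real) \<Rightarrow> (real \<Rightarrow> real) \<Rightarrow> real \<Rightarrow> real" where
  "h0_of f h z = h z - (\<integral>e. h e \<partial>err_dist f) - z / err_var f * (\<integral>e. e * h e \<partial>err_dist f)"

definition l0_of :: "(real \<Rightarrow> real) \<Rightarrow> (real \<Rightarrow> real) \<Rightarrow> real \<Rightarrow> real" where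
  "l0_of f f' z = score f f' z - z / err_var f"

definition s_star :: "(real^'m) measure \<Rightarrow> (real^'m \<Rightarrow> real) \<Rightarrow> (real \<Rightarrow> real) \<Rightarrow> (real \<Rightarrow> real)
    \<Rightarrow> (real \<Rightarrow> real) \<Rightarrow> real \<Rightarrow> real" where
  "s_star G \<pi> f f' h z = (1 / resp_prob G \<pi>) *
     (h0_of f h z + err_var f * (\<integral>e. h0_of f h e * l0_of f f' e \<partial>err_dist f) * l0_of f f' z)"

definition t_star :: "(real^'m) measure \<Rightarrow> (real^'m \<Rightarrow> real) \<Rightarrow> (real \<Rightarrow> real) \<Rightarrow> (real \<Rightarrow> real)
    \<Rightarrow> (real \<Rightarrow> real) \<Rightarrow> real^'m \<Rightarrow> real" where
  "t_star G \<pi> f f' h x = - err_var f / resp_prob G \<pi> * (\<integral>e. h0_of f h e * l0_of f f' e \<partial>err_dist f)"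

definition g_star :: "(real^'m) measure \<Rightarrow> (real^'m \<Rightarrow> real) \<Rightarrow> (real \<Rightarrow> real) \<Rightarrow> (real \<Rightarrow> real)
    \<Rightarrow> (real \<Rightarrow> real) \<Rightarrow> (real^'m) \<times> bool \<times> real \<Rightarrow> real" where
  "g_star G \<pi> f f' h = (\<lambda>(x, d, z). if d then s_star G \<pi> f f' h z + score f f' z * t_star G \<pi> f f' h x else 0)"

end

theory Submission
  imports Defs
begin

(* Put p = E \<delta> and c = E[h0(\<epsilon>) l0(\<epsilon>)]. Since l0(z) = l(z) - z/\<sigma>\<^sup>2, on the event \<delta> = 1 the
   candidate gradient is s*(\<epsilon>) + l(\<epsilon>) t* = (h0(\<epsilon>) - c \<epsilon>) / p, so g* is the score of the
   direction (0, s*, t*, 0), and s* \<in> S because h0 and l0 are orthogonal to 1 and to \<epsilon>.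
   As \<epsilon> is independent of (X, \<delta>), E[g* d\<gamma>] factorises into covariate and error integrals:
   the u-, w- and t-terms vanish because h0 - c\<epsilon> is orthogonal to 1 and to l (note E[h0 l] = c),
   and the s-term is E[h0(\<epsilon>) s(\<epsilon>)] because E[\<epsilon> s(\<epsilon>)] = 0.
   This uses E l(\<epsilon>) = 0 and E[\<epsilon> l(\<epsilon>)] = 1, i.e. that f' and z f'(z) + f(z) integrate to 0,
   which holds because f and z f(z) are integrable with integrable derivatives and so vanish at
   infinity. The score only sees f' off {f = 0}; f' integrates to 0 over {f = 0} \<inter> [c, d] since
   the open set where f \<noteq> 0 between two zeros of f is a disjoint union of intervals whose
   endpoints are zeros of f. *)

section \<open>Primitives of locally integrable functions\<close>

definition is_primitive :: "(real \<Rightarrow> real) \<Rightarrow> (real \<Rightarrow> real) \<Rightarrow> bool" where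
  "is_primitive F g \<longleftrightarrow>
     (\<forall>a b. a \<le> b \<longrightarrow> g absolutely_integrable_on {a..b} \<and> integral {a..b} g = F b - F a)"

lemma is_primitiveD:
  assumes "is_primitive F g" "a \<le> b"
  shows "set_integrable lebesgue {a..b} g" "(LINT x:{a..b}|lebesgue. g x) = F b - F a"
  using assms by (auto simp: is_primitive_def set_lebesgue_integral_eq_integral(2))

lemma is_primitive_continuous:
  assumes "is_primitive F g"
  shows "continuous_on UNIV F"
proof -
  have "isCont F x" for x
  proof -
    have "g integrable_on {x-1..x+1}"
      using is_primitiveD(1)[OF assms, of "x-1" "x+1"] set_lebesgue_integral_eq_integral(1) by simp
    then have "continuous_on {x-1..x+1} (\<lambda>y. F (x-1) + integral {x-1..y} g)"
      by (intro continuous_on_add continuous_on_const indefinite_integral_continuous_1)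
    moreover have "F (x-1) + integral {x-1..y} g = F y" if "y \<in> {x-1..x+1}" for y
      using assms that by (simp add: is_primitive_def)
    ultimately have "continuous_on {x-1..x+1} F"
      using continuous_on_eq by blast
    then show ?thesis
      by (rule continuous_on_interior) (auto simp: interior_atLeastAtMost_real)
  qed
  then show ?thesis by (simp add: continuous_on_eq_continuous_at)
qed

lemma component_of_bounded_open_real:
  fixes U :: "real set"
  assumes U: "open U" "bounded U" and C: "C \<in> components U"
  obtains a b where "a < b" "C = {a<..<b}" "a \<notin> U" "b \<notin> U"
proof -
  have "open C" using open_components[OF U(1) C] .
  have "is_interval C" using in_components_connected[OF C] by (simp add: is_interval_connected_1)
  have "C \<noteq> {}" using in_components_nonempty[OF C] .
  have "bounded C" using bounded_subset[OF U(2) in_components_subset[OF C]] .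
  then have bdd: "bdd_below C" "bdd_above C"
    by (simp_all add: bounded_imp_bdd_below bounded_imp_bdd_above)
  define a b where "a = Inf C" and "b = Sup C"
  have C_eq: "C = {a<..<b}"
  proof (intro set_eqI iffI)
    fix x assume "x \<in> C"
    with \<open>open C\<close> obtain e where "e > 0" "ball x e \<subseteq> C" by (meson openE)
    then have "x - e/2 \<in> C" "x + e/2 \<in> C" by (auto simp: dist_real_def subset_iff)
    then have "a \<le> x - e/2" "x + e/2 \<le> b"
      unfolding a_def b_def using bdd by (simp_all add: cInf_lower cSup_upper)
    with \<open>e > 0\<close> show "x \<in> {a<..<b}" by simp
  next
    fix x assume "x \<in> {a<..<b}"
    then obtain y z where "y \<in> C" "y < x" "z \<in> C" "x < z"
      using \<open>C \<noteq> {}\<close> bdd unfolding a_def b_def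
      by (metis cInf_less_iff greaterThanLessThan_iff less_cSup_iff)
    with \<open>is_interval C\<close> show "x \<in> C"
      by (meson is_interval_1 less_imp_le)
  qed
  obtain y where C_comp: "C = connected_component_set U y" using C by (rule componentsE)
  have not_in_U: "x \<notin> U" if "x \<in> closure C" "x \<notin> C" for x
    using in_closure_connected_component[OF _ U(1), of x y] that C_comp by blast
  have "a \<in> closure C" "b \<in> closure C"
    unfolding a_def b_def using \<open>C \<noteq> {}\<close> bdd
    by (simp_all add: closure_contains_Inf closure_contains_Sup)
  then have "a \<notin> U" "b \<notin> U" using not_in_U C_eq by auto
  moreover have "a < b" using \<open>C \<noteq> {}\<close> C_eq by auto
  ultimately show ?thesis using that C_eq by blast
qed

lemma set_integral_open_eq_0_by_components:
  fixes g :: "real \<Rightarrow> real"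
  assumes U: "open U" "set_integrable lebesgue U g"
    and comp: "\<And>C. C \<in> components U \<Longrightarrow> (LINT x:C|lebesgue. g x) = 0"
  shows "(LINT x:U|lebesgue. g x) = 0"
proof (cases "U = {}")
  case False
  have "countable (components U)"
    using pairwise_disjoint_components[of U]
    by (intro countable_disjoint_open_subsets[OF open_components[OF U(1)]])
       (simp_all add: pairwise_def disjnt_def)
  moreover have "components U \<noteq> {}" using False by simp
  ultimately have range_e: "range (from_nat_into (components U)) = components U" by simp
  define V where "V N = \<Union>(from_nat_into (components U) ` {..<N})" for N
  have comp_sets: "C \<in> sets lebesgue" "set_integrable lebesgue C g" if "C \<in> components U" for C
    using open_components[OF U(1) that] in_components_subset[OF that]
    by (simp_all add: borel_open set_integrable_subset[OF U(2)])
  have e_comp: "from_nat_into (components U) i \<in> components U" for i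
    using range_e by blast
  have V_sets: "V N \<in> sets lebesgue" for N
    unfolding V_def using comp_sets(1)[OF e_comp] by blast
  have "(LINT x:V N|lebesgue. g x) = 0" for N
  proof -
    let ?I = "from_nat_into (components U) ` {..<N}"
    have "disjoint_family_on id ?I"
      using pairwise_disjoint_components[of U] e_comp
      unfolding disjoint_family_on_def pairwise_def by (metis id_apply imageE)
    then have "(LINT x:V N|lebesgue. g x) = (\<Sum>C\<in>?I. LINT x:C|lebesgue. g x)"
      unfolding V_def using set_integral_finite_Union[of ?I id lebesgue g] comp_sets e_comp
      by auto
    also have "\<dots> = 0" using e_comp comp by (auto intro: sum.neutral)
    finally show ?thesis .
  qed
  moreover have V_Union: "(\<Union>N. V N) = U"
  proof -
    have "(\<Union>N. V N) = \<Union>(range (from_nat_into (components U)))"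
      unfolding V_def by (auto intro: lessI)
    then show ?thesis using range_e by simp
  qed
  moreover have "incseq V"
    unfolding incseq_def V_def by (metis Sup_subset_mono image_mono lessThan_subset_iff)
  then have "(\<lambda>N. LINT x:V N|lebesgue. g x) \<longlonglongrightarrow> (LINT x:(\<Union>N. V N)|lebesgue. g x)"
    using V_sets U(2) V_Union by (intro set_integral_cont_up) auto
  ultimately show ?thesis by (simp add: LIMSEQ_const_iff)
qed (simp add: set_lebesgue_integral_def)

lemma is_primitive_set_integral_between_zeros:
  assumes prim: "is_primitive F g" and "a \<le> b" and zeros: "F a = 0" "F b = 0"
  shows "(LINT x:({a<..<b} \<inter> {x. F x \<noteq> 0})|lebesgue. g x) = 0"
proof (rule set_integral_open_eq_0_by_components)
  let ?U = "{a<..<b} \<inter> {x. F x \<noteq> 0}"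
  show "open ?U"
    using is_primitive_continuous[OF prim]
    by (intro open_Int open_greaterThanLessThan open_Collect_neq) auto
  then show "set_integrable lebesgue ?U g"
    by (intro set_integrable_subset[OF is_primitiveD(1)[OF prim \<open>a \<le> b\<close>]]) (auto simp: borel_open)
  fix C assume C: "C \<in> components ?U"
  obtain a' b' where "a' < b'" and C_eq: "C = {a'<..<b'}" and "a' \<notin> ?U" "b' \<notin> ?U"
    by (rule component_of_bounded_open_real[OF \<open>open ?U\<close> _ C]) (simp add: bounded_Int)
  have "C \<subseteq> {a<..<b}" using in_components_subset[OF C] by auto
  then have "a \<le> a'" "b' \<le> b"
    using \<open>a' < b'\<close> C_eq greaterThanLessThan_subseteq_greaterThanLessThan by blast+
  have "F x = 0" if "a \<le> x" "x \<le> b" "x \<notin> ?U" for x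
    using that zeros by (cases "x = a \<or> x = b") auto
  then have "F a' = 0" "F b' = 0"
    using \<open>a \<le> a'\<close> \<open>b' \<le> b\<close> \<open>a' < b'\<close> \<open>a' \<notin> ?U\<close> \<open>b' \<notin> ?U\<close> by auto
  have int_C: "set_integrable lebesgue {a'..b'} g"
    using is_primitiveD(1)[OF prim] \<open>a' < b'\<close> by simp
  have "(LINT x:C|lebesgue. g x) = integral {a'<..<b'} g"
    unfolding C_eq by (intro set_lebesgue_integral_eq_integral(2) set_integrable_subset[OF int_C]) auto
  also have "\<dots> = F b' - F a'"
    using prim \<open>a' < b'\<close> by (simp add: is_primitive_def integral_open_interval_real[symmetric])
  finally show "(LINT x:C|lebesgue. g x) = 0" using \<open>F a' = 0\<close> \<open>F b' = 0\<close> by simp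
qed

lemma is_primitive_set_integral_zero_set:
  assumes prim: "is_primitive F g"
  shows "(LINT x:({c..d} \<inter> {x. F x = 0})|lebesgue. g x) = 0"
proof (cases "{c..d} \<inter> {x. F x = 0} = {}")
  case False
  define K where "K = {c..d} \<inter> {x. F x = 0}"
  have "closed K"
    unfolding K_def using is_primitive_continuous[OF prim]
    by (intro closed_Int closed_atLeastAtMost closed_Collect_eq) auto
  have "bounded K" by (simp add: K_def bounded_Int)
  then have bdd: "bdd_below K" "bdd_above K"
    by (simp_all add: bounded_imp_bdd_below bounded_imp_bdd_above)
  define a b where "a = Inf K" and "b = Sup K"
  have "a \<in> K" "b \<in> K"
    unfolding a_def b_def using False \<open>closed K\<close> bdd
    by (simp_all add: closed_contains_Inf closed_contains_Sup flip: K_def)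
  then have zeros: "F a = 0" "F b = 0" by (auto simp: K_def)
  have "a \<le> b" unfolding a_def b_def using False bdd by (simp add: cInf_le_cSup flip: K_def)
  have "K \<subseteq> {a..b}" unfolding a_def b_def using bdd by (auto intro: cInf_lower cSup_upper)
  then have K_eq: "K = {a..b} \<inter> {x. F x = 0}"
    using \<open>a \<in> K\<close> \<open>b \<in> K\<close> by (auto simp: K_def)
  define U where "U = {a<..<b} \<inter> {x. F x \<noteq> 0}"
  have split: "{a..b} = K \<union> U" "K \<inter> U = {}"
    using zeros by (auto simp: K_eq U_def)
  have "open U"
    unfolding U_def using is_primitive_continuous[OF prim]
    by (intro open_Int open_greaterThanLessThan open_Collect_neq) auto
  then have "K \<in> sets lebesgue" "U \<in> sets lebesgue"
    using \<open>closed K\<close> by (simp_all add: borel_closed borel_open)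
  then have "set_integrable lebesgue K g" "set_integrable lebesgue U g"
    using split by (auto intro: set_integrable_subset[OF is_primitiveD(1)[OF prim \<open>a \<le> b\<close>]])
  then have "(LINT x:{a..b}|lebesgue. g x) = (LINT x:K|lebesgue. g x) + (LINT x:U|lebesgue. g x)"
    using split by (simp add: set_integral_Un)
  moreover have "(LINT x:U|lebesgue. g x) = 0"
    unfolding U_def by (rule is_primitive_set_integral_between_zeros[OF prim \<open>a \<le> b\<close> zeros])
  moreover have "(LINT x:{a..b}|lebesgue. g x) = 0"
    using is_primitiveD(2)[OF prim \<open>a \<le> b\<close>] zeros by simp
  ultimately show ?thesis by (simp add: K_def)
qed (simp add: set_lebesgue_integral_def)

lemma is_primitive_restrict_zero_set:
  assumes prim: "is_primitive F g"
  shows "is_primitive F (\<lambda>x. if F x = 0 then 0 else g x)"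
  unfolding is_primitive_def
proof (intro allI impI)
  fix c d :: real assume "c \<le> d"
  define Z where "Z = {c..d} \<inter> {x. F x = 0}"
  have "closed Z"
    unfolding Z_def using is_primitive_continuous[OF prim]
    by (intro closed_Int closed_atLeastAtMost closed_Collect_eq) auto
  have int_cd: "set_integrable lebesgue {c..d} g" by (rule is_primitiveD(1)[OF prim \<open>c \<le> d\<close>])
  moreover have int_Z: "set_integrable lebesgue Z g"
    using \<open>closed Z\<close> by (intro set_integrable_subset[OF int_cd]) (auto simp: Z_def borel_closed)
  moreover have restrict: "(\<lambda>x. indicator {c..d} x *\<^sub>R (if F x = 0 then 0 else g x)) =
      (\<lambda>x. indicator {c..d} x *\<^sub>R g x - indicator Z x *\<^sub>R g x)"
    by (auto simp: Z_def indicator_def)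
  ultimately have int: "set_integrable lebesgue {c..d} (\<lambda>x. if F x = 0 then 0 else g x)"
    unfolding set_integrable_def by (simp only: restrict Bochner_Integration.integrable_diff)
  have "(LINT x:{c..d}|lebesgue. if F x = 0 then 0 else g x) =
      (LINT x:{c..d}|lebesgue. g x) - (LINT x:Z|lebesgue. g x)"
    using int_cd int_Z unfolding set_lebesgue_integral_def set_integrable_def restrict
    by (rule Bochner_Integration.integral_diff)
  also have "\<dots> = F d - F c"
    using is_primitiveD(2)[OF prim \<open>c \<le> d\<close>] is_primitive_set_integral_zero_set[OF prim]
    by (simp add: Z_def)
  finally show "(\<lambda>x. if F x = 0 then 0 else g x) absolutely_integrable_on {c..d} \<and>
      integral {c..d} (\<lambda>x. if F x = 0 then 0 else g x) = F d - F c"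
    using int by (simp add: set_lebesgue_integral_eq_integral(2))
qed

lemma is_primitive_lborel:
  assumes "is_primitive F g" "g \<in> borel_measurable borel" "a \<le> b"
  shows "set_integrable lborel {a..b} g" "(LINT x:{a..b}|lborel. g x) = F b - F a"
proof -
  have "(\<lambda>x. indicator {a..b} x *\<^sub>R g x) \<in> borel_measurable lborel"
    using assms(2) by measurable
  then show "set_integrable lborel {a..b} g" "(LINT x:{a..b}|lborel. g x) = F b - F a"
    using is_primitiveD[OF assms(1,3)]
    by (simp_all add: set_integrable_def set_lebesgue_integral_def integrable_completion
        integral_completion)
qed

section \<open>Integrable primitives on the real line\<close>

lemma tendsto_set_integral_at_top:
  fixes \<psi> :: "real \<Rightarrow> real" and A :: "real \<Rightarrow> real set"
  assumes \<psi>: "integrable lborel \<psi>" and sets: "\<And>t. A t \<in> sets borel" "B \<in> sets borel"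
    and conv: "\<And>x. eventually (\<lambda>t. x \<in> A t \<longleftrightarrow> x \<in> B) at_top"
  shows "((\<lambda>t. LINT x:A t|lborel. \<psi> x) \<longlongrightarrow> (LINT x:B|lborel. \<psi> x)) at_top"
  unfolding set_lebesgue_integral_def
proof (rule integral_dominated_convergence_at_top[where w = "\<lambda>x. \<bar>\<psi> x\<bar>"])
  show "(\<lambda>x. indicator B x *\<^sub>R \<psi> x) \<in> borel_measurable lborel"
    "(\<lambda>x. indicator (A t) x *\<^sub>R \<psi> x) \<in> borel_measurable lborel" for t
    using \<psi> sets by measurable
  show "integrable lborel (\<lambda>x. \<bar>\<psi> x\<bar>)" using \<psi> by simp
  show "AE x in lborel. ((\<lambda>t. indicator (A t) x *\<^sub>R \<psi> x) \<longlongrightarrow> indicator B x *\<^sub>R \<psi> x) at_top"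
  proof (intro AE_I2 tendsto_eventually)
    fix x
    show "eventually (\<lambda>t. indicator (A t) x *\<^sub>R \<psi> x = indicator B x *\<^sub>R \<psi> x) at_top"
      using conv[of x] by eventually_elim (simp add: indicator_def)
  qed
  show "\<forall>\<^sub>F t in at_top. AE x in lborel. norm (indicator (A t) x *\<^sub>R \<psi> x) \<le> \<bar>\<psi> x\<bar>"
    by (intro always_eventually allI AE_I2) (simp add: indicator_def)
qed

lemma integrable_tendsto_at_top_imp_0:
  fixes \<phi> :: "real \<Rightarrow> real"
  assumes int: "integrable lborel \<phi>" and lim: "(\<phi> \<longlongrightarrow> L) at_top"
  shows "L = 0"
proof (rule ccontr)
  assume "L \<noteq> 0"
  have "eventually (\<lambda>x. \<bar>L\<bar> / 2 < \<bar>\<phi> x\<bar>) at_top"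
    by (rule order_tendstoD(1)[OF tendsto_rabs[OF lim]]) (use \<open>L \<noteq> 0\<close> in simp)
  then obtain B where B: "\<And>x. x \<ge> B \<Longrightarrow> \<bar>L\<bar> / 2 < \<bar>\<phi> x\<bar>"
    by (auto simp: eventually_at_top_linorder)
  define I where "I = (\<integral>x. \<bar>\<phi> x\<bar> \<partial>lborel)"
  define n where "n = 2 * I / \<bar>L\<bar> + 1"
  have "0 \<le> I" by (simp add: I_def)
  then have "0 \<le> n" using \<open>L \<noteq> 0\<close> by (simp add: n_def)
  have "(\<integral>x. indicator {B..B+n} x * (\<bar>L\<bar> / 2) \<partial>lborel) = n * (\<bar>L\<bar> / 2)"
    using \<open>0 \<le> n\<close> by simp
  moreover have "(\<integral>x. indicator {B..B+n} x * (\<bar>L\<bar> / 2) \<partial>lborel) \<le> I"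
    unfolding I_def using int B[THEN less_imp_le]
    by (intro integral_mono integrable_mult_left integrable_real_indicator)
       (auto simp: emeasure_lborel_Icc_eq indicator_def)
  moreover have "n * (\<bar>L\<bar> / 2) = I + \<bar>L\<bar> / 2" using \<open>L \<noteq> 0\<close> by (simp add: n_def field_simps)
  ultimately show False using \<open>L \<noteq> 0\<close> by simp
qed

lemma integrable_tendsto_at_bot_imp_0:
  fixes \<phi> :: "real \<Rightarrow> real"
  assumes "integrable lborel \<phi>" and "(\<phi> \<longlongrightarrow> L) at_bot"
  shows "L = 0"
proof (rule integrable_tendsto_at_top_imp_0)
  show "integrable lborel (\<lambda>x. \<phi> (- x))"
    using lborel_integrable_real_affine_iff[of "-1" \<phi> 0] assms(1) by simp
  show "((\<lambda>x. \<phi> (- x)) \<longlongrightarrow> L) at_top"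
    using assms(2) by (simp add: filterlim_at_bot_mirror)
qed

lemma integrable_primitive_tendsto_0:
  fixes G \<psi> :: "real \<Rightarrow> real"
  assumes G: "integrable lborel G" and \<psi>: "integrable lborel \<psi>"
    and prim: "\<And>a b. a \<le> b \<Longrightarrow> (LINT x:{a..b}|lborel. \<psi> x) = G b - G a"
  shows "(G \<longlongrightarrow> 0) at_top" and "(G \<longlongrightarrow> 0) at_bot"
proof -
  have "eventually (\<lambda>t. x \<in> {0..t} \<longleftrightarrow> x \<in> {0..}) at_top" for x :: real
    using eventually_ge_at_top[of x] by eventually_elim auto
  then have "((\<lambda>t. G 0 + (LINT x:{0..t}|lborel. \<psi> x)) \<longlongrightarrow> G 0 + (LINT x:{0..}|lborel. \<psi> x)) at_top"
    by (intro tendsto_add tendsto_const tendsto_set_integral_at_top[OF \<psi>]) auto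
  moreover have "eventually (\<lambda>t. G 0 + (LINT x:{0..t}|lborel. \<psi> x) = G t) at_top"
    using eventually_ge_at_top[of 0] by eventually_elim (simp add: prim)
  ultimately have "(G \<longlongrightarrow> G 0 + (LINT x:{0..}|lborel. \<psi> x)) at_top"
    by (rule Lim_transform_eventually)
  then show "(G \<longlongrightarrow> 0) at_top"
    using integrable_tendsto_at_top_imp_0[OF G] by metis
  have "eventually (\<lambda>t. x \<in> {-t..0} \<longleftrightarrow> x \<in> {..0}) at_top" for x :: real
    using eventually_ge_at_top[of "-x"] by eventually_elim auto
  then have "((\<lambda>t. G 0 - (LINT x:{-t..0}|lborel. \<psi> x)) \<longlongrightarrow> G 0 - (LINT x:{..0}|lborel. \<psi> x)) at_top"
    by (intro tendsto_diff tendsto_const tendsto_set_integral_at_top[OF \<psi>]) auto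
  moreover have "eventually (\<lambda>t. G 0 - (LINT x:{-t..0}|lborel. \<psi> x) = G (- t)) at_top"
    using eventually_ge_at_top[of 0] by eventually_elim (simp add: prim)
  ultimately have "((\<lambda>t. G (- t)) \<longlongrightarrow> G 0 - (LINT x:{..0}|lborel. \<psi> x)) at_top"
    by (rule Lim_transform_eventually)
  then have "(G \<longlongrightarrow> G 0 - (LINT x:{..0}|lborel. \<psi> x)) at_bot"
    by (simp add: filterlim_at_bot_mirror)
  then show "(G \<longlongrightarrow> 0) at_bot"
    using integrable_tendsto_at_bot_imp_0[OF G] by metis
qed

lemma integral_eq_0_if_integrable_primitive:
  fixes G \<psi> :: "real \<Rightarrow> real"
  assumes G: "integrable lborel G" and \<psi>: "integrable lborel \<psi>"
    and prim: "\<And>a b. a \<le> b \<Longrightarrow> (LINT x:{a..b}|lborel. \<psi> x) = G b - G a"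
  shows "(\<integral>x. \<psi> x \<partial>lborel) = 0"
proof -
  note G_lim = integrable_primitive_tendsto_0[OF G \<psi> prim]
  have "eventually (\<lambda>t. x \<in> {-t..t} \<longleftrightarrow> x \<in> UNIV) at_top" for x :: real
    using eventually_ge_at_top[of "\<bar>x\<bar>"] by eventually_elim auto
  then have "((\<lambda>t. LINT x:{-t..t}|lborel. \<psi> x) \<longlongrightarrow> (LINT x:UNIV|lborel. \<psi> x)) at_top"
    by (intro tendsto_set_integral_at_top[OF \<psi>]) auto
  moreover have "((\<lambda>t. LINT x:{-t..t}|lborel. \<psi> x) \<longlongrightarrow> 0 - 0) at_top"
  proof (rule Lim_transform_eventually)
    show "((\<lambda>t. G t - G (- t)) \<longlongrightarrow> 0 - 0) at_top"
      using G_lim by (intro tendsto_diff) (simp_all add: filterlim_at_bot_mirror)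
    show "eventually (\<lambda>t. G t - G (- t) = (LINT x:{-t..t}|lborel. \<psi> x)) at_top"
      using eventually_ge_at_top[of 0] by eventually_elim (simp add: prim)
  qed
  ultimately show ?thesis
    by (simp add: tendsto_unique[OF trivial_limit_at_top_linorder] set_lebesgue_integral_def)
qed

lemma integrable_pair_measure_product:
  fixes a :: "'a \<Rightarrow> real" and b :: "'b \<Rightarrow> real"
  assumes "sigma_finite_measure M" "sigma_finite_measure N"
    and a: "integrable M a" and b: "integrable N b"
  shows "integrable (M \<Otimes>\<^sub>M N) (\<lambda>z. a (fst z) * b (snd z))"
    and "(\<integral>z. a (fst z) * b (snd z) \<partial>(M \<Otimes>\<^sub>M N)) = (\<integral>x. a x \<partial>M) * (\<integral>y. b y \<partial>N)"
proof -
  interpret pair_sigma_finite M N using assms(1,2) by (simp add: pair_sigma_finite_def)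
  have meas: "(\<lambda>z. a (fst z) * b (snd z)) \<in> borel_measurable (M \<Otimes>\<^sub>M N)"
    using a b by measurable
  have "(\<lambda>z. ennreal (norm (a (fst z) * b (snd z)))) \<in> borel_measurable (M \<Otimes>\<^sub>M N)"
    using meas by measurable
  then have "(\<integral>\<^sup>+ z. ennreal (norm (a (fst z) * b (snd z))) \<partial>(M \<Otimes>\<^sub>M N))
      = (\<integral>\<^sup>+ x. \<integral>\<^sup>+ y. ennreal (norm (a x)) * ennreal (norm (b y)) \<partial>N \<partial>M)"
    by (simp add: M2.nn_integral_fst[symmetric] abs_mult ennreal_mult)
  also have "\<dots> = (\<integral>\<^sup>+ x. ennreal (norm (a x)) \<partial>M) * (\<integral>\<^sup>+ y. ennreal (norm (b y)) \<partial>N)"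
    using a b by (simp add: nn_integral_cmult nn_integral_multc)
  also have "\<dots> < \<infinity>"
    using a b by (simp add: integrable_iff_bounded ennreal_mult_less_top)
  finally show int: "integrable (M \<Otimes>\<^sub>M N) (\<lambda>z. a (fst z) * b (snd z))"
    using meas by (simp add: integrable_iff_bounded)
  show "(\<integral>z. a (fst z) * b (snd z) \<partial>(M \<Otimes>\<^sub>M N)) = (\<integral>x. a x \<partial>M) * (\<integral>y. b y \<partial>N)"
    using integral_fst'[OF int] by simp
qed

lemma sigma_finite_bool_lborel:
  "sigma_finite_measure (count_space (UNIV :: bool set) \<Otimes>\<^sub>M (lborel :: real measure))"
  by (intro sigma_finite_pair_measure sigma_finite_measure_count_space_finite
      lborel.sigma_finite_measure_axioms) simp

lemma integral_count_space_bool_pair: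
  fixes g :: "'a \<Rightarrow> real" and e :: bool
  assumes M: "sigma_finite_measure M" and g: "integrable M g"
  shows "integrable (count_space UNIV \<Otimes>\<^sub>M M) (\<lambda>(d, z). of_bool (d = e) * g z)"
    and "(\<integral>(d, z). of_bool (d = e) * g z \<partial>(count_space UNIV \<Otimes>\<^sub>M M)) = (\<integral>z. g z \<partial>M)"
proof -
  have count: "sigma_finite_measure (count_space (UNIV :: bool set))"
    by (rule sigma_finite_measure_count_space_finite) simp
  have ind: "integrable (count_space UNIV) (\<lambda>d::bool. of_bool (d = e) :: real)"
    by (rule integrable_count_space) simp
  have "(\<integral>d. of_bool (d = e) \<partial>count_space UNIV) = (1::real)"
    by (subst lebesgue_integral_count_space_finite) (auto simp: UNIV_bool)
  then show "integrable (count_space UNIV \<Otimes>\<^sub>M M) (\<lambda>(d, z). of_bool (d = e) * g z)"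
    and "(\<integral>(d, z). of_bool (d = e) * g z \<partial>(count_space UNIV \<Otimes>\<^sub>M M)) = (\<integral>z. g z \<partial>M)"
    using integrable_pair_measure_product[OF count M ind g] by (simp_all add: case_prod_beta')
qed

lemma set_integral_triangle_swap:
  fixes k :: "real \<Rightarrow> real"
  assumes k: "k \<in> borel_measurable borel" "set_integrable lborel {a..b} k"
  shows "(LINT z:{a..b}|lborel. (z - a) * k z) = (LINT y:{a..b}|lborel. (LINT z:{y..b}|lborel. k z))"
proof -
  define H where "H y z = indicator {a..b} y * indicator {a..b} z * (if y \<le> z then 1 else 0) * k z"
    for y z :: real
  have H_meas: "(\<lambda>(y, z). H y z) \<in> borel_measurable (lborel \<Otimes>\<^sub>M lborel)"
    unfolding H_def using k(1) by measurable
  have "integrable (lborel \<Otimes>\<^sub>M lborel) (\<lambda>p. indicator {a..b} (fst p) * \<bar>indicator {a..b} (snd p) * k (snd p)\<bar>)"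
    using k(2)
    by (intro integrable_pair_measure_product lborel.sigma_finite_measure_axioms integrable_abs
        integrable_real_indicator) (auto simp: set_integrable_def emeasure_lborel_Icc_eq)
  then have H_int: "integrable (lborel \<Otimes>\<^sub>M lborel) (\<lambda>(y, z). H y z)"
    by (rule Bochner_Integration.integrable_bound[OF _ H_meas])
      (auto simp: H_def indicator_def abs_mult intro!: AE_I2)
  have "(\<integral>y. H y z \<partial>lborel) = indicator {a..b} z *\<^sub>R ((z - a) * k z)" for z
  proof (cases "z \<in> {a..b}")
    case True
    then have "(\<lambda>y. H y z) = (\<lambda>y. indicator {a..z} y * k z)"
      by (auto simp: H_def indicator_def fun_eq_iff)
    then show ?thesis using True by simp
  qed (simp add: H_def)
  moreover have "(\<integral>z. H y z \<partial>lborel) = indicator {a..b} y *\<^sub>R (LINT z:{y..b}|lborel. k z)" for y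
  proof (cases "y \<in> {a..b}")
    case True
    then have "(\<lambda>z. H y z) = (\<lambda>z. indicator {y..b} z *\<^sub>R k z)"
      by (auto simp: H_def indicator_def fun_eq_iff)
    then show ?thesis using True by (simp add: set_lebesgue_integral_def)
  qed (simp add: H_def)
  ultimately show ?thesis
    using lborel_pair.Fubini_integral[OF H_int] by (simp add: set_lebesgue_integral_def)
qed

lemma set_integral_by_parts_primitive:
  fixes F k :: "real \<Rightarrow> real"
  assumes prim: "is_primitive F k" and k: "k \<in> borel_measurable borel"
    and F: "set_integrable lborel {a..b} F" and "a \<le> b"
  shows "(LINT x:{a..b}|lborel. x * k x + F x) = b * F b - a * F a"
proof -
  note k_int = is_primitive_lborel[OF prim k]
  have xk_int: "set_integrable lborel {a..b} (\<lambda>x. x * k x)"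
  proof (rule set_integrable_bound[OF set_integrable_mult_right[OF k_int(1)[OF \<open>a \<le> b\<close>]]])
    show "set_borel_measurable lborel {a..b} (\<lambda>x. x * k x)"
      using k by (simp add: set_borel_measurable_def)
    have "\<bar>x * k x\<bar> \<le> \<bar>(\<bar>a\<bar> + \<bar>b\<bar>) * k x\<bar>" if "x \<in> {a..b}" for x
      unfolding abs_mult using that by (intro mult_right_mono) auto
    then show "AE x in lborel. x \<in> {a..b} \<longrightarrow> norm (x * k x) \<le> norm ((\<bar>a\<bar> + \<bar>b\<bar>) * k x)"
      by simp
  qed
  have "(LINT x:{a..b}|lborel. x * k x) - a * (F b - F a) = (LINT z:{a..b}|lborel. (z - a) * k z)"
    using xk_int k_int[OF \<open>a \<le> b\<close>] by (simp add: left_diff_distrib set_integral_diff)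
  also have "\<dots> = (LINT y:{a..b}|lborel. (LINT z:{y..b}|lborel. k z))"
    using k k_int(1)[OF \<open>a \<le> b\<close>] by (rule set_integral_triangle_swap)
  also have "\<dots> = (LINT y:{a..b}|lborel. F b - F y)"
    using k_int(2) by (intro set_lebesgue_integral_cong) auto
  also have "\<dots> = (LINT y:{a..b}|lborel. F b) - (LINT x:{a..b}|lborel. F x)"
    using F unfolding set_integrable_def
    by (intro set_integral_diff(2)) (auto simp: set_integrable_def emeasure_lborel_Icc_eq
        intro: integrable_scaleR_left integrable_real_indicator)
  also have "\<dots> = (b - a) * F b - (LINT x:{a..b}|lborel. F x)"
    using \<open>a \<le> b\<close> by (simp add: set_lebesgue_integral_def)
  finally show ?thesis
    using xk_int F by (simp add: set_integral_add algebra_simps)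
qed

lemma density_primitive_moments:
  fixes f k :: "real \<Rightarrow> real"
  assumes prim: "is_primitive f k" and k: "k \<in> borel_measurable borel"
    and k_int: "integrable lborel k" "integrable lborel (\<lambda>x. x * k x)"
    and f_int: "integrable lborel f" "integrable lborel (\<lambda>x. x * f x)"
    and f_1: "(\<integral>x. f x \<partial>lborel) = 1"
  shows "(\<integral>x. k x \<partial>lborel) = 0" "(\<integral>x. x * k x \<partial>lborel) = -1"
proof -
  have f_set_int: "set_integrable lborel {a..b} f" for a b
    unfolding set_integrable_def by (rule integrable_mult_indicator) (use f_int(1) in auto)
  show "(\<integral>x. k x \<partial>lborel) = 0"
    using is_primitive_lborel(2)[OF prim k]
    by (rule integral_eq_0_if_integrable_primitive[OF f_int(1) k_int(1)])
  have "(\<integral>x. x * k x + f x \<partial>lborel) = 0"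
  proof (rule integral_eq_0_if_integrable_primitive[OF f_int(2)])
    show "integrable lborel (\<lambda>x. x * k x + f x)" using k_int(2) f_int(1) by simp
    show "(LINT x:{a..b}|lborel. x * k x + f x) = b * f b - a * f a" if "a \<le> b" for a b
      using that by (rule set_integral_by_parts_primitive[OF prim k f_set_int])
  qed
  then show "(\<integral>x. x * k x \<partial>lborel) = -1"
    using k_int(2) f_int(1) f_1 by simp
qed

section \<open>Square-integrable functions\<close>

lemma L2_integrable_mult:
  assumes "L2 M \<phi>" "L2 M \<psi>"
  shows "integrable M (\<lambda>x. \<phi> x * \<psi> x)"
proof (rule Bochner_Integration.integrable_bound)
  show "integrable M (\<lambda>x. (\<phi> x)\<^sup>2 + (\<psi> x)\<^sup>2)"
    using assms unfolding L2_def by simp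
  show "(\<lambda>x. \<phi> x * \<psi> x) \<in> borel_measurable M"
    using assms unfolding L2_def by (simp add: borel_measurable_times)
  have "\<bar>\<phi> x * \<psi> x\<bar> \<le> (\<phi> x)\<^sup>2 + (\<psi> x)\<^sup>2" for x
  proof -
    have "2 * \<bar>\<phi> x\<bar> * \<bar>\<psi> x\<bar> \<le> (\<phi> x)\<^sup>2 + (\<psi> x)\<^sup>2"
      using sum_squares_bound[of "\<bar>\<phi> x\<bar>" "\<bar>\<psi> x\<bar>"] by simp
    moreover have "0 \<le> \<bar>\<phi> x\<bar> * \<bar>\<psi> x\<bar>" by simp
    ultimately show ?thesis unfolding abs_mult by linarith
  qed
  then show "AE x in M. norm (\<phi> x * \<psi> x) \<le> norm ((\<phi> x)\<^sup>2 + (\<psi> x)\<^sup>2)"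
    by (intro AE_I2) simp
qed

lemma L2_const: "finite_measure M \<Longrightarrow> L2 M (\<lambda>x. c)"
  by (simp add: L2_def finite_measure.integrable_const)

lemma L2_integrable: "finite_measure M \<Longrightarrow> L2 M \<phi> \<Longrightarrow> integrable M \<phi>"
  using L2_integrable_mult[of M \<phi> "\<lambda>x. 1"] by (simp add: L2_const)

lemma L2_add:
  assumes "L2 M \<phi>" "L2 M \<psi>"
  shows "L2 M (\<lambda>x. \<phi> x + \<psi> x)"
proof -
  have "integrable M (\<lambda>x. (\<phi> x)\<^sup>2 + (\<psi> x)\<^sup>2 + 2 * (\<phi> x * \<psi> x))"
    using assms L2_integrable_mult[OF assms] unfolding L2_def by simp
  then show ?thesis
    using assms unfolding L2_def by (simp add: power2_sum borel_measurable_add mult.assoc)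
qed

lemma L2_cmult: "L2 M \<phi> \<Longrightarrow> L2 M (\<lambda>x. c * \<phi> x)"
  by (simp add: L2_def power_mult_distrib borel_measurable_times)

lemma L2_density_integrable_mult:
  assumes M: "finite_measure M" and g: "g \<in> borel_measurable M" "AE x in M. 0 \<le> g x \<and> g x \<le> C"
    and \<phi>: "L2 (density M g) \<phi>"
  shows "integrable M (\<lambda>x. g x * \<phi> x)"
proof (rule Bochner_Integration.integrable_bound)
  interpret finite_measure M by (rule M)
  have \<phi>_meas: "\<phi> \<in> borel_measurable M" using \<phi> by (simp add: L2_def)
  have "integrable M (\<lambda>x. g x * (\<phi> x)\<^sup>2)"
    using \<phi> g \<phi>_meas by (simp add: L2_def integrable_density)
  moreover have "integrable M g"
    using g by (intro integrable_const_bound[of _ C]) auto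
  ultimately show "integrable M (\<lambda>x. g x + g x * (\<phi> x)\<^sup>2)" by simp
  show "(\<lambda>x. g x * \<phi> x) \<in> borel_measurable M" using g \<phi>_meas by simp
  have bound: "\<bar>g x * \<phi> x\<bar> \<le> g x + g x * (\<phi> x)\<^sup>2" if "0 \<le> g x" for x
  proof -
    have "\<bar>\<phi> x\<bar> \<le> 1 + (\<phi> x)\<^sup>2"
      using sum_squares_bound[of 1 "\<bar>\<phi> x\<bar>"] abs_ge_zero[of "\<phi> x"] by simp
    from mult_left_mono[OF this that] show ?thesis
      using that by (simp add: abs_mult distrib_left)
  qed
  show "AE x in M. norm (g x * \<phi> x) \<le> norm (g x + g x * (\<phi> x)\<^sup>2)"
    using g(2) by eventually_elim (simp add: bound)
qed

section \<open>The error distribution\<close>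

locale error_density =
  fixes f f' :: "real \<Rightarrow> real"
  assumes f_nonneg: "\<And>z. 0 \<le> f z" and f_meas: "f \<in> borel_measurable borel"
    and f_int: "integrable lborel f" and f_int1: "(\<integral>z. f z \<partial>lborel) = 1"
    and f_mean0: "(\<integral>z. z \<partial>err_dist f) = 0"
    and f_var: "integrable (err_dist f) (\<lambda>z. z^2)"
    and f_primitive: "is_primitive f f'"
    and fisher: "L2 (err_dist f) (score f f')"
begin

abbreviation "F \<equiv> err_dist f"

lemma sets_F: "sets F = sets borel"
  by (simp add: err_dist_def)

lemma measurable_F_iff: "(\<phi> \<in> borel_measurable F) \<longleftrightarrow> (\<phi> \<in> borel_measurable borel)"
  by (simp add: measurable_cong_sets[OF sets_F refl])

sublocale F: prob_space F
proof
  have "emeasure F (space F) = (\<integral>\<^sup>+ z. ennreal (f z) \<partial>lborel)"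
    using f_meas by (simp add: err_dist_def emeasure_density)
  also have "\<dots> = 1"
    using f_int f_nonneg f_int1 by (simp add: nn_integral_eq_integral)
  finally show "emeasure F (space F) = 1" .
qed

lemma integrable_F_iff:
  "B \<in> borel_measurable borel \<Longrightarrow> integrable F B \<longleftrightarrow> integrable lborel (\<lambda>z. f z * B z)"
  using f_meas f_nonneg by (simp add: err_dist_def integrable_density)

lemma integral_F:
  "B \<in> borel_measurable borel \<Longrightarrow> (\<integral>z. B z \<partial>F) = (\<integral>z. f z * B z \<partial>lborel)"
  using f_meas f_nonneg by (simp add: err_dist_def integral_density)

lemma L2_F_measurable: "L2 F \<phi> \<Longrightarrow> \<phi> \<in> borel_measurable borel"
  by (simp add: L2_def measurable_F_iff)

lemma L2_F_integrable: "L2 F \<phi> \<Longrightarrow> integrable F \<phi>"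
  by (simp add: L2_integrable F.finite_measure_axioms)

lemma L2_id: "L2 F (\<lambda>z. z)"
  using f_var by (simp add: L2_def measurable_F_iff)

lemma err_var_pos: "0 < err_var f"
proof -
  have z2: "(\<lambda>z::real. z^2) \<in> borel_measurable borel" by measurable
  have nonneg: "AE z in lborel. 0 \<le> f z * z^2" by (simp add: f_nonneg)
  have var: "err_var f = (\<integral>z. f z * z^2 \<partial>lborel)"
    unfolding err_var_def using z2 by (rule integral_F)
  have "err_var f \<noteq> 0"
  proof
    assume "err_var f = 0"
    then have "AE z in lborel. f z * z^2 = 0"
      using integral_nonneg_eq_0_iff_AE[OF _ nonneg] f_var integrable_F_iff[OF z2] var by simp
    moreover have "AE z in lborel. z \<noteq> (0::real)"
      using AE_not_in[OF countable_imp_null_set_lborel[of "{0::real}"]] by simp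
    ultimately have "AE z in lborel. f z = 0" by eventually_elim simp
    then have "(\<integral>z. f z \<partial>lborel) = 0" by (rule integral_eq_zero_AE)
    then show False using f_int1 by simp
  qed
  moreover have "0 \<le> err_var f" unfolding var by (rule integral_nonneg_AE[OF nonneg])
  ultimately show ?thesis by simp
qed

lemma score_moments:
  shows "(\<integral>z. score f f' z \<partial>F) = 0" and "(\<integral>z. z * score f f' z \<partial>F) = 1"
proof -
  let ?l = "score f f'"
  \<comment> \<open>score f f' z = - f' z / f z is 0 where f z = 0, so -score * f is f' cut off on {f = 0}\<close>
  define k where "k = (\<lambda>z. - (?l z * f z))"
  have l_meas: "?l \<in> borel_measurable borel" by (rule L2_F_measurable[OF fisher])
  then have k_meas: "k \<in> borel_measurable borel" unfolding k_def using f_meas by measurable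
  have "k = (\<lambda>z. if f z = 0 then 0 else f' z)" by (auto simp: k_def score_def fun_eq_iff)
  then have prim: "is_primitive f k" using is_primitive_restrict_zero_set[OF f_primitive] by simp
  have "integrable lborel (\<lambda>z. f z * ?l z)"
    using L2_F_integrable[OF fisher] integrable_F_iff[OF l_meas] by simp
  then have k_int: "integrable lborel k" by (simp add: k_def mult.commute)
  have zl_meas: "(\<lambda>z. z * ?l z) \<in> borel_measurable borel" using l_meas by measurable
  have "integrable lborel (\<lambda>z. f z * (z * ?l z))"
    using L2_integrable_mult[OF L2_id fisher] integrable_F_iff[OF zl_meas] by simp
  then have zk_int: "integrable lborel (\<lambda>z. z * k z)" by (simp add: k_def mult_ac)
  have "integrable lborel (\<lambda>z. f z * z)"
    using L2_F_integrable[OF L2_id] integrable_F_iff[of "\<lambda>z. z"] by simp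
  then have zf_int: "integrable lborel (\<lambda>z. z * f z)" by (simp add: mult.commute)
  note moments = density_primitive_moments[OF prim k_meas k_int zk_int f_int zf_int f_int1]
  have "(\<integral>z. ?l z \<partial>F) = - (\<integral>z. k z \<partial>lborel)"
    unfolding integral_F[OF l_meas] k_def by (simp add: mult.commute)
  then show "(\<integral>z. ?l z \<partial>F) = 0" using moments(1) by simp
  have "(\<integral>z. z * ?l z \<partial>F) = (\<integral>z. - (z * k z) \<partial>lborel)"
    unfolding integral_F[OF zl_meas] k_def by (intro Bochner_Integration.integral_cong) auto
  then show "(\<integral>z. z * ?l z \<partial>F) = 1" using moments(2) by simp
qed

lemma L2_l0: "L2 F (l0_of f f')"
proof -
  have "l0_of f f' = (\<lambda>z. score f f' z + (- 1 / err_var f) * z)"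
    by (simp add: l0_of_def fun_eq_iff)
  then show ?thesis by (simp only: L2_add[OF fisher L2_cmult[OF L2_id]])
qed

lemma l0_moments: "(\<integral>z. l0_of f f' z \<partial>F) = 0" "(\<integral>z. z * l0_of f f' z \<partial>F) = 0"
proof -
  have int: "integrable F (score f f')" "integrable F (\<lambda>z. z)" "integrable F (\<lambda>z. z * score f f' z)"
    "integrable F (\<lambda>z. z * z)"
    using L2_F_integrable[OF fisher] L2_F_integrable[OF L2_id] L2_integrable_mult[OF L2_id fisher]
      L2_integrable_mult[OF L2_id L2_id] by simp_all
  show "(\<integral>z. l0_of f f' z \<partial>F) = 0"
    using int by (simp add: l0_of_def score_moments f_mean0)
  have "(\<integral>z. z * l0_of f f' z \<partial>F) = (\<integral>z. z * score f f' z - z * z / err_var f \<partial>F)"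
    by (simp add: l0_of_def right_diff_distrib)
  also have "\<dots> = 1 - err_var f / err_var f"
    using int by (simp add: score_moments err_var_def power2_eq_square)
  finally show "(\<integral>z. z * l0_of f f' z \<partial>F) = 0" using err_var_pos by simp
qed

definition error_gradient :: "(real \<Rightarrow> real) \<Rightarrow> real \<Rightarrow> real" where
  "error_gradient h = (\<lambda>z. h0_of f h z - (\<integral>e. h0_of f h e * l0_of f f' e \<partial>F) * z)"

context
  fixes h :: "real \<Rightarrow> real"
  assumes h: "L2 F h"
begin

lemma L2_h0: "L2 F (h0_of f h)"
proof -
  have "h0_of f h = (\<lambda>z. h z + (- (\<integral>e. h e \<partial>F) + (- (\<integral>e. e * h e \<partial>F) / err_var f) * z))"
    by (simp add: h0_of_def fun_eq_iff)
  then show ?thesis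
    by (simp only: L2_add[OF h L2_add[OF L2_const[OF F.finite_measure_axioms] L2_cmult[OF L2_id]]])
qed

lemma h0_moments: "(\<integral>z. h0_of f h z \<partial>F) = 0" "(\<integral>z. z * h0_of f h z \<partial>F) = 0"
proof -
  have int: "integrable F h" "integrable F (\<lambda>z. z)" "integrable F (\<lambda>z. z * h z)"
    "integrable F (\<lambda>z. z * z)"
    using L2_F_integrable[OF h] L2_F_integrable[OF L2_id] L2_integrable_mult[OF L2_id h]
      L2_integrable_mult[OF L2_id L2_id] by simp_all
  show "(\<integral>z. h0_of f h z \<partial>F) = 0"
    using int by (simp add: h0_of_def f_mean0 F.prob_space)
  have "(\<lambda>z. z * h0_of f h z) =
      (\<lambda>z. z * h z - (\<integral>e. h e \<partial>F) * z - (\<integral>e. e * h e \<partial>F) / err_var f * (z * z))"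
    by (simp add: h0_of_def fun_eq_iff algebra_simps)
  then have "(\<integral>z. z * h0_of f h z \<partial>F) =
      (\<integral>e. e * h e \<partial>F) - (\<integral>e. e * h e \<partial>F) / err_var f * err_var f"
    using int by (simp add: Bochner_Integration.integral_diff f_mean0 err_var_def power2_eq_square)
  then show "(\<integral>z. z * h0_of f h z \<partial>F) = 0" using err_var_pos by simp
qed

lemma L2_error_gradient: "L2 F (error_gradient h)"
  unfolding error_gradient_def diff_conv_add_uminus minus_mult_left
  by (rule L2_add[OF L2_h0 L2_cmult[OF L2_id]])

lemma error_gradient_mean: "(\<integral>z. error_gradient h z \<partial>F) = 0"
  using L2_F_integrable[OF L2_h0] L2_F_integrable[OF L2_id]
  by (simp add: error_gradient_def h0_moments f_mean0)

lemma error_gradient_inner: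
  assumes s: "L2 F s" and s_ortho: "(\<integral>z. z * s z \<partial>F) = 0"
  shows "(\<integral>z. error_gradient h z * s z \<partial>F) = (\<integral>z. h0_of f h z * s z \<partial>F)"
proof -
  have "(\<lambda>z. error_gradient h z * s z) =
      (\<lambda>z. h0_of f h z * s z - (\<integral>e. h0_of f h e * l0_of f f' e \<partial>F) * (z * s z))"
    by (simp add: error_gradient_def fun_eq_iff algebra_simps)
  then show ?thesis
    using L2_integrable_mult[OF L2_h0 s] L2_integrable_mult[OF L2_id s] s_ortho
    by (simp add: Bochner_Integration.integral_diff)
qed

lemma error_gradient_score: "(\<integral>z. error_gradient h z * score f f' z \<partial>F) = 0"
proof -
  have "(\<lambda>z. h0_of f h z * score f f' z) =
      (\<lambda>z. h0_of f h z * l0_of f f' z + (z * h0_of f h z) / err_var f)"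
    by (simp add: l0_of_def fun_eq_iff algebra_simps)
  then have "(\<integral>z. h0_of f h z * score f f' z \<partial>F) = (\<integral>z. h0_of f h z * l0_of f f' z \<partial>F)"
    using L2_integrable_mult[OF L2_h0 L2_l0] L2_integrable_mult[OF L2_id L2_h0]
    by (simp add: h0_moments)
  moreover have "(\<lambda>z. error_gradient h z * score f f' z) =
      (\<lambda>z. h0_of f h z * score f f' z - (\<integral>e. h0_of f h e * l0_of f f' e \<partial>F) * (z * score f f' z))"
    by (simp add: error_gradient_def fun_eq_iff algebra_simps)
  ultimately show ?thesis
    using L2_integrable_mult[OF L2_h0 fisher] L2_integrable_mult[OF L2_id fisher]
    by (simp add: Bochner_Integration.integral_diff score_moments)
qed
end

end

section \<open>The missing-at-random regression model\<close>

locale mar_model = error_density f f' for f f' :: "real \<Rightarrow> real" +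
  fixes G :: "(real^'m) measure" and \<pi> :: "real^'m \<Rightarrow> real"
  assumes G_prob: "prob_space G" and G_sets: "sets G = sets borel"
    and \<pi>_meas: "\<pi> \<in> borel_measurable borel"
    and \<pi>_bounds: "AE x in G. 0 < \<pi> x \<and> \<pi> x \<le> 1"
begin

sublocale G: prob_space G by (rule G_prob)

abbreviation "P \<equiv> joint_law G \<pi> f"

lemma measurable_G_iff: "(\<phi> \<in> borel_measurable G) \<longleftrightarrow> (\<phi> \<in> borel_measurable borel)"
  by (simp add: measurable_cong_sets[OF G_sets refl])

lemma \<pi>_meas_G: "\<pi> \<in> borel_measurable G"
  using \<pi>_meas by (simp add: measurable_G_iff)

lemma integrable_\<pi>: "integrable G \<pi>"
  using \<pi>_bounds by (intro G.integrable_const_bound[OF _ \<pi>_meas_G]) (auto elim: eventually_mono)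

lemma resp_prob_pos: "0 < resp_prob G \<pi>"
proof -
  have nonneg: "AE x in G. 0 \<le> \<pi> x" using \<pi>_bounds by eventually_elim simp
  have "resp_prob G \<pi> \<noteq> 0"
  proof
    assume "resp_prob G \<pi> = 0"
    then have "AE x in G. \<pi> x = 0"
      using integral_nonneg_eq_0_iff_AE[OF integrable_\<pi> nonneg] by (simp add: resp_prob_def)
    with \<pi>_bounds have "AE x in G. False" by eventually_elim simp
    then show False by simp
  qed
  moreover have "0 \<le> resp_prob G \<pi>"
    unfolding resp_prob_def by (rule integral_nonneg_AE[OF nonneg])
  ultimately show ?thesis by simp
qed

lemma integral_joint_law_density:
  assumes \<phi>: "\<phi> \<in> borel_measurable (G \<Otimes>\<^sub>M (count_space UNIV \<Otimes>\<^sub>M lborel))"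
  defines "\<rho> \<equiv> \<lambda>(x, d, z). (if d then \<pi> x else 1 - \<pi> x) * f z"
  shows "integrable P \<phi> \<longleftrightarrow> integrable (G \<Otimes>\<^sub>M (count_space UNIV \<Otimes>\<^sub>M lborel)) (\<lambda>\<omega>. \<rho> \<omega> * \<phi> \<omega>)"
    and "(\<integral>\<omega>. \<phi> \<omega> \<partial>P) = (\<integral>\<omega>. \<rho> \<omega> * \<phi> \<omega> \<partial>(G \<Otimes>\<^sub>M (count_space UNIV \<Otimes>\<^sub>M lborel)))"
proof -
  let ?N = "count_space (UNIV :: bool set) \<Otimes>\<^sub>M (lborel :: real measure)"
  interpret GN: pair_sigma_finite G ?N
    using sigma_finite_bool_lborel
    by (simp add: pair_sigma_finite_def prob_space_imp_sigma_finite[OF G_prob])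
  have P_eq: "P = density (G \<Otimes>\<^sub>M ?N) (\<lambda>\<omega>. ennreal (\<rho> \<omega>))"
    unfolding joint_law_def \<rho>_def by (simp add: case_prod_beta')
  have \<rho>_meas: "\<rho> \<in> borel_measurable (G \<Otimes>\<^sub>M ?N)"
    unfolding \<rho>_def using \<pi>_meas_G f_meas by measurable
  have \<rho>_nonneg: "AE \<omega> in G \<Otimes>\<^sub>M ?N. 0 \<le> \<rho> \<omega>"
  proof (rule GN.AE_pair_measure)
    show "{\<omega> \<in> space (G \<Otimes>\<^sub>M ?N). 0 \<le> \<rho> \<omega>} \<in> sets (G \<Otimes>\<^sub>M ?N)" using \<rho>_meas by measurable
    show "AE x in G. AE y in ?N. 0 \<le> \<rho> (x, y)"
      using \<pi>_bounds by eventually_elim (auto simp: \<rho>_def f_nonneg)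
  qed
  show "integrable P \<phi> \<longleftrightarrow> integrable (G \<Otimes>\<^sub>M ?N) (\<lambda>\<omega>. \<rho> \<omega> * \<phi> \<omega>)"
    unfolding P_eq using integrable_density[OF \<phi> \<rho>_meas \<rho>_nonneg] by simp
  show "(\<integral>\<omega>. \<phi> \<omega> \<partial>P) = (\<integral>\<omega>. \<rho> \<omega> * \<phi> \<omega> \<partial>(G \<Otimes>\<^sub>M ?N))"
    unfolding P_eq using integral_density[OF \<phi> \<rho>_meas \<rho>_nonneg] by simp
qed

lemma integral_joint_law_product:
  fixes a :: "real^'m \<Rightarrow> bool \<Rightarrow> real" and b :: "real \<Rightarrow> real"
  assumes a_meas: "\<And>d. (\<lambda>x. a x d) \<in> borel_measurable borel"
    and a_int: "integrable G (\<lambda>x. \<pi> x * a x True)" "integrable G (\<lambda>x. (1 - \<pi> x) * a x False)"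
    and b_int: "integrable F b"
  shows "integrable P (\<lambda>(x, d, z). a x d * b z)"
    and "(\<integral>(x, d, z). a x d * b z \<partial>P) =
      ((\<integral>x. \<pi> x * a x True \<partial>G) + (\<integral>x. (1 - \<pi> x) * a x False \<partial>G)) * (\<integral>z. b z \<partial>F)"
proof -
  let ?N = "count_space (UNIV :: bool set) \<Otimes>\<^sub>M (lborel :: real measure)"
  have b_meas: "b \<in> borel_measurable borel"
    using borel_measurable_integrable[OF b_int] by (simp add: measurable_F_iff)
  have "(\<lambda>(x, d, z). a x d * b z) = (\<lambda>(x, d, z). (if d then a x True else a x False) * b z)"
    by (auto simp: fun_eq_iff)
  then have \<phi>_meas: "(\<lambda>(x, d, z). a x d * b z) \<in> borel_measurable (G \<Otimes>\<^sub>M ?N)"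
    using a_meas b_meas by (simp add: measurable_G_iff[symmetric]) measurable
  define A where "A = (\<lambda>e x. (if e then \<pi> x else 1 - \<pi> x) * a x e)"
  define B where "B = (\<lambda>e (d :: bool, z). of_bool (d = e) * (f z * b z))"
  have "integrable lborel (\<lambda>z. f z * b z)" using b_int integrable_F_iff[OF b_meas] by simp
  note B_int = integral_count_space_bool_pair[OF lborel.sigma_finite_measure_axioms this]
  have A_int: "integrable G (A e)" for e using a_int by (cases e) (simp_all add: A_def)
  note product = integrable_pair_measure_product[OF prob_space_imp_sigma_finite[OF G_prob]
      sigma_finite_bool_lborel A_int B_int(1)]
  have terms: "integrable (G \<Otimes>\<^sub>M ?N) (\<lambda>\<omega>. A e (fst \<omega>) * B e (snd \<omega>))"
    "(\<integral>\<omega>. A e (fst \<omega>) * B e (snd \<omega>) \<partial>(G \<Otimes>\<^sub>M ?N)) = (\<integral>x. A e x \<partial>G) * (\<integral>z. b z \<partial>F)" for e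
    using product[of e e] B_int(2)[of e] by (simp_all add: B_def integral_F[OF b_meas] case_prod_beta')
  have split: "(case \<omega> of (x, d, z) \<Rightarrow> (if d then \<pi> x else 1 - \<pi> x) * f z)
        * (case \<omega> of (x, d, z) \<Rightarrow> a x d * b z)
      = A True (fst \<omega>) * B True (snd \<omega>) + A False (fst \<omega>) * B False (snd \<omega>)" for \<omega>
    by (cases \<omega>) (auto simp: A_def B_def)
  show "integrable P (\<lambda>(x, d, z). a x d * b z)"
    unfolding integral_joint_law_density(1)[OF \<phi>_meas] split
    by (rule Bochner_Integration.integrable_add[OF terms(1) terms(1)])
  have "(\<integral>(x, d, z). a x d * b z \<partial>P) =
      (\<integral>x. A True x \<partial>G) * (\<integral>z. b z \<partial>F) + (\<integral>x. A False x \<partial>G) * (\<integral>z. b z \<partial>F)"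
    unfolding integral_joint_law_density(2)[OF \<phi>_meas] split
    by (simp only: Bochner_Integration.integral_add[OF terms(1) terms(1)] terms(2))
  then show "(\<integral>(x, d, z). a x d * b z \<partial>P) =
      ((\<integral>x. \<pi> x * a x True \<partial>G) + (\<integral>x. (1 - \<pi> x) * a x False \<partial>G)) * (\<integral>z. b z \<partial>F)"
    by (simp add: A_def algebra_simps)
qed

lemma integral_joint_law_respondents:
  fixes a :: "real^'m \<Rightarrow> real" and b :: "real \<Rightarrow> real"
  assumes a: "a \<in> borel_measurable borel" "integrable G (\<lambda>x. \<pi> x * a x)"
    and b: "integrable F b"
  shows "integrable P (\<lambda>(x, d, z). if d then a x * b z else 0)"
    and "(\<integral>(x, d, z). (if d then a x * b z else 0) \<partial>P) = (\<integral>x. \<pi> x * a x \<partial>G) * (\<integral>z. b z \<partial>F)"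
proof -
  have "(\<lambda>(x, d, z). (if d then a x else 0) * b z) = (\<lambda>(x, d, z). if d then a x * b z else 0)"
    by (auto simp: fun_eq_iff)
  then show "integrable P (\<lambda>(x, d, z). if d then a x * b z else 0)"
    "(\<integral>(x, d, z). (if d then a x * b z else 0) \<partial>P) = (\<integral>x. \<pi> x * a x \<partial>G) * (\<integral>z. b z \<partial>F)"
    using integral_joint_law_product[of "\<lambda>x d. if d then a x else 0" b] a b by simp_all
qed

lemma integral_joint_law_error:
  fixes b :: "real \<Rightarrow> real"
  assumes b: "integrable F b"
  shows "(\<integral>\<omega>. b (snd (snd \<omega>)) \<partial>P) = (\<integral>z. b z \<partial>F)"
proof -
  have "integrable G (\<lambda>x. 1 - \<pi> x)"
    using \<pi>_bounds \<pi>_meas_G by (intro G.integrable_const_bound[where B = 1]) (auto elim: eventually_mono)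
  moreover have "(\<integral>x. \<pi> x \<partial>G) + (\<integral>x. 1 - \<pi> x \<partial>G) = 1"
    using integrable_\<pi> calculation by (simp add: Bochner_Integration.integral_diff G.prob_space)
  ultimately show ?thesis
    using integral_joint_law_product[of "\<lambda>x d. 1" b] integrable_\<pi> b
    by (simp add: case_prod_beta')
qed

lemma s_star_score_t_star:
  "s_star G \<pi> f f' h z + score f f' z * t_star G \<pi> f f' h x = error_gradient h z / resp_prob G \<pi>"
proof -
  have "(1 / e) * (H + err_var f * c * (S - z / err_var f)) + S * (- err_var f / e * c) = (H - c * z) / e"
    if "e \<noteq> 0" for H S c e :: real
    using that err_var_pos by (simp add: field_simps)
  from this[OF resp_prob_pos[THEN less_imp_neq, symmetric]] show ?thesis
    by (simp add: s_star_def t_star_def error_gradient_def l0_of_def)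
qed

lemma s_star_in_S_set:
  assumes h: "L2 F h"
  shows "s_star G \<pi> f f' h \<in> S_set f"
proof -
  define c where "c = err_var f * (\<integral>e. h0_of f h e * l0_of f f' e \<partial>F)"
  have s_star: "s_star G \<pi> f f' h = (\<lambda>z. (1 / resp_prob G \<pi>) * (h0_of f h z + c * l0_of f f' z))"
    by (simp add: s_star_def c_def fun_eq_iff)
  have "L2 F (s_star G \<pi> f f' h)"
    unfolding s_star by (rule L2_cmult[OF L2_add[OF L2_h0[OF h] L2_cmult[OF L2_l0]]])
  moreover have "(\<integral>z. s_star G \<pi> f f' h z \<partial>F) = 0"
    using L2_F_integrable[OF L2_h0[OF h]] L2_F_integrable[OF L2_l0]
    by (simp add: s_star h0_moments[OF h] l0_moments)
  moreover have "(\<integral>z. z * s_star G \<pi> f f' h z \<partial>F) = 0"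
  proof -
    have "(\<lambda>z. z * s_star G \<pi> f f' h z) =
        (\<lambda>z. (1 / resp_prob G \<pi>) * (z * h0_of f h z) + (c / resp_prob G \<pi>) * (z * l0_of f f' z))"
      by (simp add: s_star fun_eq_iff algebra_simps)
    then show ?thesis
      using L2_integrable_mult[OF L2_id L2_h0[OF h]] L2_integrable_mult[OF L2_id L2_l0]
      by (simp add: h0_moments[OF h] l0_moments)
  qed
  ultimately show ?thesis by (simp add: S_set_def)
qed

lemma canonical_direction_in_tangent_index:
  assumes h: "L2 F h"
  shows "((\<lambda>_. 0), s_star G \<pi> f f' h, t_star G \<pi> f f' h, (\<lambda>_. 0)) \<in> tangent_index G \<pi> f"
proof -
  have "integrable G (\<lambda>x. (\<pi> x / resp_prob G \<pi>) *\<^sub>R c\<^sup>2)" for c :: real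
    using integrable_\<pi> by simp
  moreover have "AE x in G. 0 \<le> \<pi> x / resp_prob G \<pi>"
    using \<pi>_bounds resp_prob_pos by (auto elim: eventually_mono)
  ultimately have "integrable (G1 G \<pi>) (\<lambda>x. c\<^sup>2)" for c :: real
    unfolding G1_def using integrable_density[of "\<lambda>x. c\<^sup>2" G "\<lambda>x. \<pi> x / resp_prob G \<pi>"] \<pi>_meas_G
    by simp
  then have "L2 (G1 G \<pi>) (t_star G \<pi> f f' h)"
    by (simp add: L2_def t_star_def[abs_def] G1_def)
  then show ?thesis
    using s_star_in_S_set[OF h]
    by (simp add: tangent_index_def L2_def Gpi_def)
qed

lemma g_star_eq:
  "g_star G \<pi> f f' h = (\<lambda>(x, d, z). if d then 1 * (error_gradient h z / resp_prob G \<pi>) else 0)"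
  \<comment> \<open>the factor 1 gives the shape a x * b z expected by integral_joint_law_respondents\<close>
  by (simp add: g_star_def s_star_score_t_star cong: if_cong)

lemma L2_g_star:
  assumes h: "L2 F h"
  shows "L2 P (g_star G \<pi> f f' h)"
proof -
  have "L2 F (\<lambda>z. error_gradient h z / resp_prob G \<pi>)"
    unfolding divide_inverse mult.commute[of _ "inverse _"]
    by (rule L2_cmult[OF L2_error_gradient[OF h]])
  then have "integrable F (\<lambda>z. error_gradient h z / resp_prob G \<pi>)"
    "integrable F (\<lambda>z. (error_gradient h z / resp_prob G \<pi>)\<^sup>2)"
    by (simp_all add: L2_F_integrable L2_def)
  then have "integrable P (g_star G \<pi> f f' h)"
    "integrable P (\<lambda>(x, d, z). if d then 1 * (error_gradient h z / resp_prob G \<pi>)\<^sup>2 else 0)"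
    using integrable_\<pi> unfolding g_star_eq
    by (simp_all add: integral_joint_law_respondents(1) del: mult_1)
  moreover have "(\<lambda>\<omega>. (g_star G \<pi> f f' h \<omega>)\<^sup>2) =
      (\<lambda>(x, d, z). if d then 1 * (error_gradient h z / resp_prob G \<pi>)\<^sup>2 else 0)"
    by (auto simp: g_star_eq fun_eq_iff)
  ultimately show ?thesis by (simp add: L2_def borel_measurable_integrable)
qed

lemma integrable_tangent_covariate_terms:
  assumes u: "L2 G u" and t: "L2 (G1 G \<pi>) t" and w: "L2 (Gpi G \<pi>) w"
  shows "integrable G (\<lambda>x. \<pi> x * (u x + (1 - \<pi> x) * w x))"
    and "integrable G (\<lambda>x. \<pi> x * t x)"
proof -
  have u_meas: "u \<in> borel_measurable G" using u by (simp add: L2_def)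
  have "AE x in G. norm (\<pi> x * u x) \<le> norm (u x)"
    using \<pi>_bounds by eventually_elim (simp add: abs_mult mult_left_le_one_le)
  then have "integrable G (\<lambda>x. \<pi> x * u x)"
    using \<pi>_meas_G u_meas
    by (intro Bochner_Integration.integrable_bound[OF L2_integrable[OF G.finite_measure_axioms u]])
       simp_all
  moreover have "integrable G (\<lambda>x. (\<pi> x * (1 - \<pi> x)) * w x)"
  proof (rule L2_density_integrable_mult[OF G.finite_measure_axioms])
    show "(\<lambda>x. \<pi> x * (1 - \<pi> x)) \<in> borel_measurable G" using \<pi>_meas_G by simp
    show "AE x in G. 0 \<le> \<pi> x * (1 - \<pi> x) \<and> \<pi> x * (1 - \<pi> x) \<le> 1"
      using \<pi>_bounds by eventually_elim (simp add: mult_le_one)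
    show "L2 (density G (\<lambda>x. ennreal (\<pi> x * (1 - \<pi> x)))) w" using w by (simp add: Gpi_def)
  qed
  ultimately show "integrable G (\<lambda>x. \<pi> x * (u x + (1 - \<pi> x) * w x))"
    by (simp add: distrib_left mult.assoc)
  have "integrable G (\<lambda>x. (\<pi> x / resp_prob G \<pi>) * t x)"
  proof (rule L2_density_integrable_mult[OF G.finite_measure_axioms])
    show "(\<lambda>x. \<pi> x / resp_prob G \<pi>) \<in> borel_measurable G" using \<pi>_meas_G by simp
    show "AE x in G. 0 \<le> \<pi> x / resp_prob G \<pi> \<and> \<pi> x / resp_prob G \<pi> \<le> 1 / resp_prob G \<pi>"
      using \<pi>_bounds by eventually_elim (use resp_prob_pos in \<open>simp add: divide_right_mono\<close>)
    show "L2 (density G (\<lambda>x. ennreal (\<pi> x / resp_prob G \<pi>))) t" using t by (simp add: G1_def)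
  qed
  from integrable_mult_right[OF this, of "resp_prob G \<pi>"]
  show "integrable G (\<lambda>x. \<pi> x * t x)" using resp_prob_pos by simp
qed

lemma g_star_mult_d_score:
  "g_star G \<pi> f f' h \<omega> * d_score (score f f') \<pi> (u, s, t, w) \<omega> =
      (case \<omega> of (x, d, z) \<Rightarrow> if d then (u x + (1 - \<pi> x) * w x) * (error_gradient h z / resp_prob G \<pi>) else 0)
    + (case \<omega> of (x, d, z) \<Rightarrow> if d then 1 * (error_gradient h z * s z / resp_prob G \<pi>) else 0)
    + (case \<omega> of (x, d, z) \<Rightarrow> if d then t x * (error_gradient h z * score f f' z / resp_prob G \<pi>) else 0)"
  by (cases \<omega>) (simp add: g_star_eq d_score_def algebra_simps add_divide_distrib)

lemma gradient_identity:
  assumes h: "L2 F h" and \<gamma>: "\<gamma> \<in> tangent_index G \<pi> f"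
  shows "(\<integral>\<omega>. h0_of f h (snd (snd \<omega>)) * fst (snd \<gamma>) (snd (snd \<omega>)) \<partial>P)
    = (\<integral>\<omega>. g_star G \<pi> f f' h \<omega> * d_score (score f f') \<pi> \<gamma> \<omega> \<partial>P)"
proof -
  obtain u s t w where \<gamma>_eq: "\<gamma> = (u, s, t, w)" and u: "L2 G u" and s: "s \<in> S_set f"
    and t: "L2 (G1 G \<pi>) t" and w: "L2 (Gpi G \<pi>) w"
    using \<gamma> by (auto simp: tangent_index_def)
  have s_L2: "L2 F s" and s_ortho: "(\<integral>z. z * s z \<partial>F) = 0" using s by (simp_all add: S_set_def)
  have "u \<in> borel_measurable borel" "w \<in> borel_measurable borel" "t \<in> borel_measurable borel"
    using u w t by (simp_all add: L2_def Gpi_def G1_def measurable_G_iff)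
  then have a_meas: "(\<lambda>x. u x + (1 - \<pi> x) * w x) \<in> borel_measurable borel" "t \<in> borel_measurable borel"
    using \<pi>_meas by simp_all
  define e where "e = resp_prob G \<pi>"
  have "integrable F (\<lambda>z. error_gradient h z * v z / e)" if "L2 F v" for v
    using L2_integrable_mult[OF L2_error_gradient[OF h] that] by simp
  from this[of "\<lambda>z. 1"] this[OF s_L2] this[OF fisher]
  have b_int: "integrable F (\<lambda>z. error_gradient h z / e)" "integrable F (\<lambda>z. error_gradient h z * s z / e)"
    "integrable F (\<lambda>z. error_gradient h z * score f f' z / e)"
    using L2_const[OF F.finite_measure_axioms] by simp_all
  note terms = integral_joint_law_respondents[OF a_meas(1) integrable_tangent_covariate_terms(1)[OF u t w] b_int(1)]
    integral_joint_law_respondents[of "\<lambda>x. 1", OF _ _ b_int(2)]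
    integral_joint_law_respondents[OF a_meas(2) integrable_tangent_covariate_terms(2)[OF u t w] b_int(3)]
  have "(\<integral>\<omega>. g_star G \<pi> f f' h \<omega> * d_score (score f f') \<pi> \<gamma> \<omega> \<partial>P) =
      (\<integral>x. \<pi> x * (u x + (1 - \<pi> x) * w x) \<partial>G) * (\<integral>z. error_gradient h z / e \<partial>F)
      + (\<integral>x. \<pi> x * 1 \<partial>G) * (\<integral>z. error_gradient h z * s z / e \<partial>F)
      + (\<integral>x. \<pi> x * t x \<partial>G) * (\<integral>z. error_gradient h z * score f f' z / e \<partial>F)"
    unfolding \<gamma>_eq g_star_mult_d_score e_def[symmetric] using terms integrable_\<pi>
    by (simp add: Bochner_Integration.integral_add)
  also have "\<dots> = (\<integral>z. h0_of f h z * s z \<partial>F)"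
    using resp_prob_pos error_gradient_mean[OF h] error_gradient_score[OF h]
      error_gradient_inner[OF h s_L2 s_ortho]
    by (simp add: e_def resp_prob_def)
  also have "\<dots> = (\<integral>\<omega>. h0_of f h (snd (snd \<omega>)) * fst (snd \<gamma>) (snd (snd \<omega>)) \<partial>P)"
    using integral_joint_law_error[OF L2_integrable_mult[OF L2_h0[OF h] s_L2]] by (simp add: \<gamma>_eq)
  finally show ?thesis ..
qed

end

lemma is_canonical_gradient_score:
  assumes \<gamma>: "\<gamma> \<in> tangent_index G \<pi> f" and L2: "L2 (joint_law G \<pi> f) (d_score l \<pi> \<gamma>)"
    and gradient: "\<And>\<gamma>'. \<gamma>' \<in> tangent_index G \<pi> f \<Longrightarrow>
      (\<integral>\<omega>. h0 (snd (snd \<omega>)) * fst (snd \<gamma>') (snd (snd \<omega>)) \<partial>joint_law G \<pi> f)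
      = (\<integral>\<omega>. d_score l \<pi> \<gamma> \<omega> * d_score l \<pi> \<gamma>' \<omega> \<partial>joint_law G \<pi> f)"
  shows "is_canonical_gradient G \<pi> f l h0 (d_score l \<pi> \<gamma>)"
  unfolding is_canonical_gradient_def using \<gamma> L2 gradient by auto

theorem lemma1:
  fixes G :: "(real^'m) measure" and \<pi> :: "real^'m \<Rightarrow> real"
    and f f' h :: "real \<Rightarrow> real"
  assumes G_prob: "prob_space G" and G_sets: "sets G = sets borel"
    and G_cube: "AE x in G. x \<in> unit_cube"
    and \<pi>_meas: "\<pi> \<in> borel_measurable borel"
    and \<pi>_range: "\<And>x. x \<in> unit_cube \<Longrightarrow> 0 < \<pi> x \<and> \<pi> x \<le> 1"
    and f_nonneg: "\<And>z. 0 \<le> f z" and f_meas: "f \<in> borel_measurable borel"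
    and f_int: "integrable lborel f" and f_int1: "(\<integral>z. f z \<partial>lborel) = 1"
    and f_mean_int: "integrable (err_dist f) (\<lambda>z. z)"
    and f_mean0: "(\<integral>z. z \<partial>err_dist f) = 0"
    and f_var: "integrable (err_dist f) (\<lambda>z. z^2)"
    and f_abs_cont: "\<And>a b. a \<le> b \<Longrightarrow>
          f' absolutely_integrable_on {a..b} \<and> integral {a..b} f' = f b - f a"
    and fisher: "L2 (err_dist f) (score f f')"
    and h_L2: "L2 (err_dist f) h"
  shows "((\<lambda>_. 0), s_star G \<pi> f f' h, t_star G \<pi> f f' h, (\<lambda>_. 0)) \<in> tangent_index G \<pi> f
       \<and> g_star G \<pi> f f' h = d_score (score f f') \<pi> ((\<lambda>_. 0), s_star G \<pi> f f' h, t_star G \<pi> f f' h, (\<lambda>_. 0))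
       \<and> is_canonical_gradient G \<pi> f (score f f') (h0_of f h) (g_star G \<pi> f f' h)"
proof -
  have "mar_model f f' G \<pi>"
  proof (intro mar_model.intro error_density.intro mar_model_axioms.intro)
    show "is_primitive f f'" using f_abs_cont by (simp add: is_primitive_def)
    show "AE x in G. 0 < \<pi> x \<and> \<pi> x \<le> 1" using G_cube by eventually_elim (rule \<pi>_range)
  qed (fact assms)+
  then interpret mar_model f f' G \<pi> .
  let ?\<gamma> = "((\<lambda>_. 0), s_star G \<pi> f f' h, t_star G \<pi> f f' h, (\<lambda>_. 0))"
  have g_star: "g_star G \<pi> f f' h = d_score (score f f') \<pi> ?\<gamma>"
    by (simp add: g_star_def d_score_def)
  show ?thesis
    using canonical_direction_in_tangent_index[OF h_L2] L2_g_star[OF h_L2]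
      gradient_identity[OF h_L2]
    by (simp add: g_star is_canonical_gradient_score)
qed

end
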